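(* Consider a linear additive SCM on $(X,S)$ given by the structural equations $X=MX+wS+b+U_X$, $S=U_S$, where $w,b\in\mathbb R^d$, $M\in\mathbb R^{d\times d}$ are deterministic with $I-M$ invertible, the graph is acyclic, and $U_S$ is independent of $U_X$. Then Assumption (I) holds and for $s,s'\in\mathcal S$ the structural counterfactual operator is $T^*_{\langle s'|s\rangle}(x)=x+(I-M)^{-1}w(s'-s)$. If moreover the distributions $\{\mu_s\}_{s\in\mathcal S}$ are absolutely continuous with respect to Lebesgue measure and have finite second-order moments, then for any $s,s'\in\mathcal S$, $T^*_{\langle s'|s\rangle}$ is the solution of $$\min_{T:\ T_\sharp\mu_s=\mu_{s'}}\int\|x-T(x)\|^2\,\mathrm d\mu_s(x).$$
   Context: Setting: a structural causal model (exogenous random vector $U$, structural equations defining endogenous variables from their endogenous and exogenous parents, acyclic graph, hence an a.s. unique solution) whose solution is $(X,S)$ with $X\in\mathbb R^d$ and $S$ taking values in a finite set $\mathcal S\subset\mathbb R$ with $\mathbb P(S=s)>0$ for all $s$. $U_X,U_S$ are the exogenous parents of $X$ and $S$. For $s\in\mathcal S$, $X_{S=s}$ is the $X$-component of the solution of the model in which the equation for $S$ is replaced by $S=s$ and everything else (including $U$) is kept. $\mu_s:=\mathcal L(X\mid S=s)$, $\mathcal X_s:=\operatorname{supp}\mu_s$. There is a measurable $F$ with $X=F(S,U_X)$ and $X_{S=s}=F(s,U_X)$ a.s.; $f_s(u):=F(s,u)$. Assumption (I): all $f_s$ are injective; then $T^*_{\langle s'|s\rangle}:=f_{s'}\circ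 f_s^{-1}|_{\mathcal X_s}$. $T_\sharp P:=P\circ T^{-1}$. *)

theory Defs
  imports "HOL-Probability.Probability"
begin

definition measure_support :: "'b::metric_space measure \<Rightarrow> 'b set" where
  "measure_support \<mu> = {x. \<forall>e>0. emeasure \<mu> (ball x e) > 0}"

text \<open>The causal graph induced by the coefficient matrix M (edge j -> i iff M i j \<noteq> 0)
  is acyclic: there is a topological ordering of the nodes.\<close>
definition acyclic_coeff :: "real^'d^'d \<Rightarrow> bool" where
  "acyclic_coeff M \<longleftrightarrow> (\<exists>r::'d \<Rightarrow> nat. inj r \<and> (\<forall>i j. M $ i $ j \<noteq> 0 \<longrightarrow> r j < r i))"

definition cond_law :: "'a measure \<Rightarrow> ('a \<Rightarrow> 'b::topological_space) \<Rightarrow> ('a \<Rightarrow> real) \<Rightarrow> real \<Rightarrow> 'b measure" where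
  "cond_law P X S s = distr (uniform_measure P {\<omega>\<in>space P. S \<omega> = s}) borel X"

end

theory Submission
  imports Defs
begin

text \<open>Solving the structural equation gives \<open>X = (I - M)\<^sup>-\<^sup>1 (S w + b + U_X)\<close>, so each
  \<open>f_s\<close> is an injective affine map and the counterfactual operator from \<open>s\<close> to \<open>s'\<close> is the
  translation by \<open>c = (I - M)\<^sup>-\<^sup>1 (s' - s) w\<close>. Independence of \<open>U_S\<close> and \<open>U_X\<close> makes \<open>\<mu>_s\<close> the
  image of the law of \<open>U_X\<close> under \<open>f_s\<close>, hence \<open>\<mu>_s'\<close> is the translate of \<open>\<mu>_s\<close> by \<open>c\<close>.
  A translation is the unique optimal map for the quadratic cost: if \<open>T\<close> pushes \<open>\<mu>_s\<close> to
  \<open>\<mu>_s'\<close>, the cross term \<open>\<integral> (x + c - T x) \<bullet> c\<close> vanishes because \<open>T\<close> and \<open>x + c\<close> have the same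
  law, so \<open>\<integral> |x - T x|\<^sup>2 = \<integral> |x + c - T x|\<^sup>2 + |c|\<^sup>2\<close>.\<close>

lemma invertible_matrix_inv_mult:
  fixes B :: "'a::semiring_1^'n^'n"
  assumes "invertible B"
  shows "B ** matrix_inv B = mat 1" and "matrix_inv B ** B = mat 1"
  using someI_ex[OF assms[unfolded invertible_def]] unfolding matrix_inv_def by auto

lemma affine_fixed_point_iff:
  fixes M :: "real^'n^'n"
  assumes "invertible (mat 1 - M)"
  shows "y = M *v y + v \<longleftrightarrow> y = matrix_inv (mat 1 - M) *v v"
proof -
  have "y = M *v y + v \<longleftrightarrow> (mat 1 - M) *v y = v"
    by (auto simp: matrix_vector_mult_diff_rdistrib algebra_simps)
  also have "\<dots> \<longleftrightarrow> y = matrix_inv (mat 1 - M) *v v"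
    using invertible_matrix_inv_mult[OF assms]
    by (metis matrix_vector_mul_assoc matrix_vector_mul_lid)
  finally show ?thesis .
qed

lemma inj_matrix_inv_translate:
  fixes B :: "real^'n^'n"
  assumes "invertible B"
  shows "inj (\<lambda>u. matrix_inv B *v (v + u))"
  using invertible_matrix_inv_mult(1)[OF assms]
  by (intro injI) (metis add_left_cancel matrix_vector_mul_assoc matrix_vector_mul_lid)

lemma matrix_inv_translate_counterfactual:
  fixes B :: "real^'n^'n"
  assumes "invertible B"
  shows "matrix_inv B *v (v' + inv_into UNIV (\<lambda>u. matrix_inv B *v (v + u)) x)
    = x + matrix_inv B *v (v' - v)"
proof -
  let ?f = "\<lambda>u. matrix_inv B *v (v + u)"
  have "?f (B *v x - v) = x"
    using invertible_matrix_inv_mult(2)[OF assms] by (simp add: matrix_vector_mul_assoc)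
  then have "?f (inv_into UNIV ?f x) = x"
    by (metis f_inv_into_f rangeI)
  moreover have "v + u + (v' - v) = v' + u" for u :: "real^'n"
    by simp
  ultimately show ?thesis
    by (metis matrix_vector_right_distrib)
qed

lemma borel_measurable_matrix_vector_mult[measurable]:
  fixes A :: "real^'n^'m"
  assumes "f \<in> borel_measurable M"
  shows "(\<lambda>x. A *v f x) \<in> borel_measurable M"
  using borel_measurable_continuous_onI[OF matrix_vector_mult_linear_continuous_on] assms
  by (rule measurable_compose[rotated])

lemma cond_law_independent_noise:
  fixes X :: "'a \<Rightarrow> 'b::topological_space" and U :: "'a \<Rightarrow> 'c::topological_space"
    and S :: "'a \<Rightarrow> real"
  assumes "prob_space P"
    and [measurable]: "S \<in> borel_measurable P" "U \<in> borel_measurable P" "X \<in> borel_measurable P"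
      "g \<in> borel_measurable borel"
    and indep: "prob_space.indep_set P
        (sigma_sets (space P) {S -` A \<inter> space P | A. A \<in> sets borel})
        (sigma_sets (space P) {U -` A \<inter> space P | A. A \<in> sets borel})"
    and pos: "measure P {\<omega>\<in>space P. S \<omega> = s} > 0"
    and X_eq: "\<And>\<omega>. \<omega> \<in> space P \<Longrightarrow> S \<omega> = s \<Longrightarrow> X \<omega> = g (U \<omega>)"
  shows "cond_law P X S s = distr P borel (\<lambda>\<omega>. g (U \<omega>))"
proof (rule measure_eqI)
  interpret prob_space P by fact
  show "sets (cond_law P X S s) = sets (distr P borel (\<lambda>\<omega>. g (U \<omega>)))"
    by (simp add: cond_law_def)
  fix B assume "B \<in> sets (cond_law P X S s)"
  then have [measurable]: "B \<in> sets borel"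
    by (simp add: cond_law_def)
  have g_B: "g -` B \<in> sets borel"
    using measurable_sets_borel[of g borel B] by simp
  define E where "E = {\<omega>\<in>space P. S \<omega> = s}"
  define G where "G = U -` (g -` B) \<inter> space P"
  have [measurable]: "E \<in> sets P" "G \<in> sets P"
    unfolding E_def G_def by measurable
  have "prob (E \<inter> G) = prob E * prob G"
  proof (rule indep_setD[OF indep])
    show "E \<in> sigma_sets (space P) {S -` A \<inter> space P | A. A \<in> sets borel}"
      unfolding E_def by (intro sigma_sets.Basic) (auto intro!: exI[of _ "{s}"] simp: vimage_def)
    show "G \<in> sigma_sets (space P) {U -` A \<inter> space P | A. A \<in> sets borel}"
      unfolding G_def by (intro sigma_sets.Basic) (use g_B in \<open>auto intro!: exI[of _ "g -` B"]\<close>)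
  qed
  moreover have "prob E > 0"
    using pos by (simp add: E_def)
  moreover have "E \<inter> (X -` B \<inter> space P) = E \<inter> G"
    using X_eq by (auto simp: E_def G_def)
  ultimately have "emeasure P (E \<inter> (X -` B \<inter> space P)) / emeasure P E = emeasure P G"
    by (simp add: emeasure_eq_measure divide_ennreal)
  moreover have "emeasure (cond_law P X S s) B = emeasure P (E \<inter> (X -` B \<inter> space P)) / emeasure P E"
    unfolding cond_law_def E_def[symmetric] by (subst emeasure_distr) auto
  moreover have "emeasure (distr P borel (\<lambda>\<omega>. g (U \<omega>))) B = emeasure P G"
    unfolding G_def by (subst emeasure_distr) (auto simp: vimage_def)
  ultimately show "emeasure (cond_law P X S s) B = emeasure (distr P borel (\<lambda>\<omega>. g (U \<omega>))) B"
    by simp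
qed

lemma norm_diff_square_le: "norm (a - b :: 'b::real_normed_vector)^2 \<le> 2 * (norm a^2 + norm b^2)"
proof -
  have "norm (a - b)^2 \<le> (norm a + norm b)^2"
    by (intro power_mono norm_triangle_ineq4) simp
  also have "\<dots> \<le> 2 * (norm a^2 + norm b^2)"
    using zero_le_power2[of "norm a - norm b"] by (simp add: power2_eq_square algebra_simps)
  finally show ?thesis .
qed

lemma integrable_norm_diff_square:
  fixes g h :: "'a \<Rightarrow> 'b::{real_normed_vector, second_countable_topology}"
  assumes [measurable]: "g \<in> borel_measurable N" "h \<in> borel_measurable N"
    and "integrable N (\<lambda>x. norm (g x)^2)" "integrable N (\<lambda>x. norm (h x)^2)"
  shows "integrable N (\<lambda>x. norm (g x - h x)^2)"
proof (rule Bochner_Integration.integrable_bound)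
  show "integrable N (\<lambda>x. 2 * (norm (g x)^2 + norm (h x)^2))"
    using assms by auto
  show "AE x in N. norm (norm (g x - h x)^2) \<le> norm (2 * (norm (g x)^2 + norm (h x)^2))"
    using norm_diff_square_le by (intro AE_I2) simp
qed measurable

lemma (in finite_measure) integrable_if_square_integrable_norm:
  fixes g :: "'a \<Rightarrow> 'b::{banach, second_countable_topology}"
  assumes [measurable]: "g \<in> borel_measurable M" and "integrable M (\<lambda>x. norm (g x)^2)"
  shows "integrable M g"
  using square_integrable_imp_integrable[of "\<lambda>x. norm (g x)"] assms
  by (simp add: integrable_norm_iff)

lemma integrable_norm_square_same_law:
  fixes f g :: "'a \<Rightarrow> 'b::{real_normed_vector, second_countable_topology}"
  assumes [measurable]: "f \<in> borel_measurable M" "g \<in> borel_measurable M"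
    and law: "distr M borel g = distr M borel f"
    and "integrable M (\<lambda>x. norm (f x)^2)"
  shows "integrable M (\<lambda>x. norm (g x)^2)"
proof -
  have "integrable (distr M borel g) (\<lambda>y. norm y^2)"
    unfolding law using assms by (subst integrable_distr_eq) auto
  then show ?thesis
    by (subst (asm) integrable_distr_eq) auto
qed

lemma transport_cost_translation:
  fixes \<nu> :: "'b::euclidean_space measure" and T' :: "'b \<Rightarrow> 'b"
  assumes "prob_space \<nu>" and sets: "sets \<nu> = sets borel"
    and sq: "integrable \<nu> (\<lambda>x. norm x^2)"
    and [measurable]: "T' \<in> borel_measurable borel"
    and law: "distr \<nu> borel T' = distr \<nu> borel (\<lambda>x. x + c)"
  shows "integrable \<nu> (\<lambda>x. norm (x - T' x)^2)"
    and "integrable \<nu> (\<lambda>x. norm (x + c - T' x)^2)"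
    and "(\<integral>x. norm (x - T' x)^2 \<partial>\<nu>) = (\<integral>x. norm (x + c - T' x)^2 \<partial>\<nu>) + norm c^2"
proof -
  interpret prob_space \<nu> by fact
  note sets_borel[measurable_cong] = sets
  have sq_shift: "integrable \<nu> (\<lambda>x. norm (x + c)^2)"
    using integrable_norm_diff_square[of "\<lambda>x. x" \<nu> "\<lambda>_. - c"] sq by simp
  have sq_T': "integrable \<nu> (\<lambda>x. norm (T' x)^2)"
    using integrable_norm_square_same_law[OF _ _ law sq_shift] by simp
  show "integrable \<nu> (\<lambda>x. norm (x - T' x)^2)"
    by (rule integrable_norm_diff_square[OF _ _ sq sq_T']) auto
  define D where "D x = x + c - T' x" for x
  show sq_D: "integrable \<nu> (\<lambda>x. norm (x + c - T' x)^2)"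
    by (rule integrable_norm_diff_square[OF _ _ sq_shift sq_T']) auto
  have int_id: "integrable \<nu> (\<lambda>x. x)" and int_T': "integrable \<nu> T'"
    using sq sq_T' by (auto intro: integrable_if_square_integrable_norm)
  then have int_Dc: "integrable \<nu> (\<lambda>x. D x \<bullet> c)"
    by (auto simp: D_def)
  have "(\<integral>x. T' x \<bullet> c \<partial>\<nu>) = (\<integral>y. y \<bullet> c \<partial>distr \<nu> borel T')"
    by (subst integral_distr) auto
  also have "\<dots> = (\<integral>x. (x + c) \<bullet> c \<partial>\<nu>)"
    unfolding law by (subst integral_distr) auto
  finally have "(\<integral>x. D x \<bullet> c \<partial>\<nu>) = 0"
    using int_id int_T' by (simp add: D_def inner_diff_left)
  moreover have "norm (x - T' x)^2 = norm (D x)^2 - 2 * (D x \<bullet> c) + norm c^2" for x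
  proof -
    have "x - T' x = D x - c" by (simp add: D_def)
    then show ?thesis
      by (simp add: power2_norm_eq_inner inner_diff_left inner_diff_right inner_commute)
  qed
  ultimately show "(\<integral>x. norm (x - T' x)^2 \<partial>\<nu>) = (\<integral>x. norm (x + c - T' x)^2 \<partial>\<nu>) + norm c^2"
    using sq_D int_Dc by (simp add: D_def prob_space)
qed

lemma translation_optimal_transport:
  fixes \<nu> \<nu>' :: "'b::euclidean_space measure" and c :: 'b
  assumes "prob_space \<nu>" and sets: "sets \<nu> = sets borel"
    and sq: "integrable \<nu> (\<lambda>x. norm x^2)"
    and target: "distr \<nu> borel (\<lambda>x. x + c) = \<nu>'"
  shows "(\<lambda>x. x + c) \<in> borel_measurable borel \<and> distr \<nu> borel (\<lambda>x. x + c) = \<nu>'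
    \<and> (\<forall>T'. T' \<in> borel_measurable borel \<and> distr \<nu> borel T' = \<nu>' \<longrightarrow>
        (\<integral>\<^sup>+x. ennreal ((norm (x - (x + c)))\<^sup>2) \<partial>\<nu>) \<le> (\<integral>\<^sup>+x. ennreal ((norm (x - T' x))\<^sup>2) \<partial>\<nu>)
      \<and> ((\<integral>\<^sup>+x. ennreal ((norm (x - T' x))\<^sup>2) \<partial>\<nu>) = (\<integral>\<^sup>+x. ennreal ((norm (x - (x + c)))\<^sup>2) \<partial>\<nu>)
         \<longrightarrow> (AE x in \<nu>. T' x = x + c)))"
proof -
  interpret prob_space \<nu> by fact
  have "(\<integral>\<^sup>+x. ennreal ((norm (x - (x + c)))\<^sup>2) \<partial>\<nu>) \<le> (\<integral>\<^sup>+x. ennreal ((norm (x - T' x))\<^sup>2) \<partial>\<nu>)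
      \<and> ((\<integral>\<^sup>+x. ennreal ((norm (x - T' x))\<^sup>2) \<partial>\<nu>) = (\<integral>\<^sup>+x. ennreal ((norm (x - (x + c)))\<^sup>2) \<partial>\<nu>)
         \<longrightarrow> (AE x in \<nu>. T' x = x + c))"
    if [measurable]: "T' \<in> borel_measurable borel" and "distr \<nu> borel T' = \<nu>'" for T'
  proof -
    note sets_borel[measurable_cong] = sets
    have "distr \<nu> borel T' = distr \<nu> borel (\<lambda>x. x + c)"
      using that target by simp
    note cost = transport_cost_translation[OF assms(1-3) that(1) this]
    have cost_c: "(\<integral>\<^sup>+x. ennreal ((norm (x - (x + c)))\<^sup>2) \<partial>\<nu>) = ennreal (norm c^2)"
      by (simp add: emeasure_space_1)
    have "(\<integral>\<^sup>+x. ennreal ((norm (x - T' x))\<^sup>2) \<partial>\<nu>) = ennreal (\<integral>x. norm (x - T' x)^2 \<partial>\<nu>)"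
      using cost(1) by (intro nn_integral_eq_integral) auto
    then have cost_T': "(\<integral>\<^sup>+x. ennreal ((norm (x - T' x))\<^sup>2) \<partial>\<nu>)
        = ennreal ((\<integral>x. norm (x + c - T' x)^2 \<partial>\<nu>) + norm c^2)"
      using cost(3) by simp
    have excess_nonneg: "0 \<le> (\<integral>x. norm (x + c - T' x)^2 \<partial>\<nu>)"
      by (rule integral_nonneg_AE) auto
    have "(\<integral>x. norm (x + c - T' x)^2 \<partial>\<nu>) = 0 \<Longrightarrow> AE x in \<nu>. T' x = x + c"
      using integral_nonneg_eq_0_iff_AE[OF cost(2)] by (auto elim: AE_mp)
    then show ?thesis
      unfolding cost_c cost_T' using excess_nonneg by (auto intro: ennreal_leI)
  qed
  then show ?thesis
    using target by simp
qed

theorem corollary1: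
  fixes P :: "'a measure"
    and X :: "'a \<Rightarrow> real^'d" and S U_S :: "'a \<Rightarrow> real" and U_X :: "'a \<Rightarrow> real^'d"
    and M :: "real^'d^'d" and w b :: "real^'d" and SS :: "real set"
    and F :: "real \<Rightarrow> real^'d \<Rightarrow> real^'d"
    and \<mu> :: "real \<Rightarrow> (real^'d) measure"
    and T :: "real \<Rightarrow> real \<Rightarrow> real^'d \<Rightarrow> real^'d"
  assumes P: "prob_space P"
    and UX_meas: "U_X \<in> borel_measurable P"
    and US_meas: "U_S \<in> borel_measurable P"
    and indep: "prob_space.indep_set P
        (sigma_sets (space P) {U_S -` A \<inter> space P | A. A \<in> sets borel})
        (sigma_sets (space P) {U_X -` A \<inter> space P | A. A \<in> sets borel})"
    and invIM: "invertible (mat 1 - M)"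
    and acyc: "acyclic_coeff M"
    and eqS: "\<forall>\<omega>\<in>space P. S \<omega> = U_S \<omega>"
    and eqX: "\<forall>\<omega>\<in>space P. X \<omega> = M *v X \<omega> + S \<omega> *\<^sub>R w + b + U_X \<omega>"
    and SS_fin: "finite SS"
    and S_in: "\<forall>\<omega>\<in>space P. S \<omega> \<in> SS"
    and S_pos: "\<forall>s\<in>SS. measure P {\<omega>\<in>space P. S \<omega> = s} > 0"
  defines "F \<equiv> \<lambda>s u. matrix_inv (mat 1 - M) *v (s *\<^sub>R w + b + u)"
    and "\<mu> \<equiv> \<lambda>s. cond_law P X S s"
    and "T \<equiv> \<lambda>s s' x. F s' (inv_into UNIV (F s) x)"
  shows
    "(\<forall>\<omega>\<in>space P. X \<omega> = F (S \<omega>) (U_X \<omega>))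
     \<and> (\<forall>s. \<forall>\<omega>\<in>space P. \<forall>y. (y = M *v y + s *\<^sub>R w + b + U_X \<omega>) \<longleftrightarrow> y = F s (U_X \<omega>))
     \<and> (\<forall>s. inj (F s))
     \<and> (\<forall>s\<in>SS. \<forall>s'\<in>SS. \<forall>x\<in>measure_support (\<mu> s).
          T s s' x = x + matrix_inv (mat 1 - M) *v ((s' - s) *\<^sub>R w))
     \<and> ((\<forall>s\<in>SS. absolutely_continuous lborel (\<mu> s) \<and> integrable (\<mu> s) (\<lambda>x. norm x ^ 2))
        \<longrightarrow> (\<forall>s\<in>SS. \<forall>s'\<in>SS.
              T s s' \<in> borel_measurable borel
            \<and> distr (\<mu> s) borel (T s s') = \<mu> s'
            \<and> (\<forall>T'. T' \<in> borel_measurable borel \<and> distr (\<mu> s) borel T' = \<mu> s' \<longrightarrow>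
                  (\<integral>\<^sup>+x. ennreal ((norm (x - T s s' x))\<^sup>2) \<partial>\<mu> s)
                    \<le> (\<integral>\<^sup>+x. ennreal ((norm (x - T' x))\<^sup>2) \<partial>\<mu> s)
                \<and> ((\<integral>\<^sup>+x. ennreal ((norm (x - T' x))\<^sup>2) \<partial>\<mu> s)
                      = (\<integral>\<^sup>+x. ennreal ((norm (x - T s s' x))\<^sup>2) \<partial>\<mu> s)
                    \<longrightarrow> (AE x in \<mu> s. T' x = T s s' x)))))"
proof -
  interpret P: prob_space P by fact
  note [measurable] = UX_meas US_meas
  define c where "c s s' = matrix_inv (mat 1 - M) *v ((s' - s) *\<^sub>R w)" for s s'
  have solve: "\<forall>s. \<forall>\<omega>\<in>space P. \<forall>y. (y = M *v y + s *\<^sub>R w + b + U_X \<omega>) \<longleftrightarrow> y = F s (U_X \<omega>)"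
    unfolding F_def add.assoc using affine_fixed_point_iff[OF invIM] by blast
  then have X_eq: "\<forall>\<omega>\<in>space P. X \<omega> = F (S \<omega>) (U_X \<omega>)"
    using eqX by blast
  have inj: "\<forall>s. inj (F s)"
    using inj_matrix_inv_translate[OF invIM] by (simp add: F_def)
  have T_eq: "T s s' = (\<lambda>x. x + c s s')" for s s'
  proof
    fix x
    have "(s' *\<^sub>R w + b) - (s *\<^sub>R w + b) = (s' - s) *\<^sub>R w"
      by (simp add: scaleR_diff_left)
    then show "T s s' x = x + c s s'"
      using matrix_inv_translate_counterfactual[OF invIM, of "s' *\<^sub>R w + b" "s *\<^sub>R w + b" x]
      unfolding T_def F_def c_def by (simp only:)
  qed
  have F_shift: "F s u + c s s' = F s' u" for s s' u
    using fun_cong[OF T_eq, of s s' "F s u"] inj by (simp add: T_def)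
  have [measurable]: "F s \<in> borel_measurable borel" for s
    by (simp add: F_def)
  have [measurable]: "S \<in> borel_measurable P"
    using eqS by (subst measurable_cong[where g = U_S]) auto
  have [measurable]: "X \<in> borel_measurable P"
    using X_eq by (subst measurable_cong[where g = "\<lambda>\<omega>. F (S \<omega>) (U_X \<omega>)"]) (auto simp: F_def)
  have "U_S -` A \<inter> space P = S -` A \<inter> space P" for A
    using eqS by auto
  then have indep_S: "P.indep_set
      (sigma_sets (space P) {S -` A \<inter> space P | A. A \<in> sets borel})
      (sigma_sets (space P) {U_X -` A \<inter> space P | A. A \<in> sets borel})"
    using indep by simp
  have law: "\<mu> s = distr P borel (\<lambda>\<omega>. F s (U_X \<omega>))" if "s \<in> SS" for s
    unfolding \<mu>_def
    by (rule cond_law_independent_noise[OF P _ UX_meas _ _ indep_S]) (use S_pos that X_eq in auto)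
  have shift: "distr (\<mu> s) borel (\<lambda>x. x + c s s') = \<mu> s'" if "s \<in> SS" "s' \<in> SS" for s s'
    using that by (simp add: law distr_distr comp_def F_shift)
  have prob: "prob_space (\<mu> s)" if "s \<in> SS" for s
    using that by (simp add: law P.prob_space_distr)
  have sets: "sets (\<mu> s) = sets borel" for s
    by (simp add: \<mu>_def cond_law_def)
  note optimal = translation_optimal_transport[OF prob sets _ shift]
  show ?thesis
    using X_eq solve inj optimal unfolding T_eq c_def by blast
qed

end
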